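(* Let $\mathcal{R}_{\mathsf{pdiv}}$ be the PTRS with rules $\mathsf{minus}(x,\mathsf{0})\to\{1:x\}$, $\mathsf{minus}(\mathsf{s}(x),\mathsf{s}(y))\to\{1:\mathsf{minus}(x,y)\}$, $\mathsf{div}(\mathsf{0},\mathsf{s}(y))\to\{1:\mathsf{0}\}$, $\mathsf{div}(\mathsf{s}(x),\mathsf{s}(y))\to\{\tfrac12:\mathsf{div}(\mathsf{s}(x),\mathsf{s}(y)),\ \tfrac12:\mathsf{s}(\mathsf{div}(\mathsf{minus}(x,y),\mathsf{s}(y)))\}$. There is no monotonic, multilinear polynomial interpretation $\mathrm{Pol}$ over $\mathbb{N}$ such that for every rule $\ell\to\{p_1:r_1,\dots,p_k:r_k\}\in\mathcal{R}_{\mathsf{pdiv}}$ both (1) $\mathrm{Pol}(\ell)>\mathrm{Pol}(r_j)$ for some $1\le j\le k$ and (2) $\mathrm{Pol}(\ell)\ge\sum_jp_j\cdot\mathrm{Pol}(r_j)$ hold.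
   Context: A polynomial interpretation assigns to every $n$-ary function symbol $f$ a polynomial $f_{\mathrm{Pol}}\in\mathbb{N}[x_1,\dots,x_n]$, extended homomorphically to terms; an inequation between interpreted terms holds if it is true for all instantiations of the variables by natural numbers. Monotonic: $x>y$ implies $f_{\mathrm{Pol}}(\dots,x,\dots)>f_{\mathrm{Pol}}(\dots,y,\dots)$ for every $f$ and argument position. Multilinear: every monomial of each $f_{\mathrm{Pol}}(x_1,\dots,x_n)$ has the form $c\,x_1^{e_1}\cdots x_n^{e_n}$ with $c\in\mathbb{N}$, $e_i\in\{0,1\}$. *)

theory Defs
  imports Complex_Main
begin

datatype trm = V nat | Zero | S trm | Minus trm trm | Div trm trm

text \<open>A multilinear polynomial interpretation over the naturals: each symbol gets a
polynomial all of whose monomials are c * x1^e1 * ... * xn^en with ei in {0,1}.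
Such a polynomial is determined by one natural coefficient per subset of its variables.\<close>
record mlpi =
  zeroC  :: nat
  sC0    :: nat    sC1 :: nat
  mC00   :: nat    mC10 :: nat   mC01 :: nat   mC11 :: nat
  dC00   :: nat    dC10 :: nat   dC01 :: nat   dC11 :: nat

definition pol_s :: "mlpi \<Rightarrow> nat \<Rightarrow> nat" where
  "pol_s I x = sC0 I + sC1 I * x"
definition pol_minus :: "mlpi \<Rightarrow> nat \<Rightarrow> nat \<Rightarrow> nat" where
  "pol_minus I x y = mC00 I + mC10 I * x + mC01 I * y + mC11 I * x * y"
definition pol_div :: "mlpi \<Rightarrow> nat \<Rightarrow> nat \<Rightarrow> nat" where
  "pol_div I x y = dC00 I + dC10 I * x + dC01 I * y + dC11 I * x * y"

fun Pol :: "mlpi \<Rightarrow> (nat \<Rightarrow> nat) \<Rightarrow> trm \<Rightarrow> nat" where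
  "Pol I \<sigma> (V n) = \<sigma> n"
| "Pol I \<sigma> Zero = zeroC I"
| "Pol I \<sigma> (S t) = pol_s I (Pol I \<sigma> t)"
| "Pol I \<sigma> (Minus t u) = pol_minus I (Pol I \<sigma> t) (Pol I \<sigma> u)"
| "Pol I \<sigma> (Div t u) = pol_div I (Pol I \<sigma> t) (Pol I \<sigma> u)"

definition monotonic :: "mlpi \<Rightarrow> bool" where
  "monotonic I \<longleftrightarrow>
     (\<forall>x y. x > y \<longrightarrow> pol_s I x > pol_s I y) \<and>
     (\<forall>x y z. x > y \<longrightarrow> pol_minus I x z > pol_minus I y z) \<and>
     (\<forall>x y z. x > y \<longrightarrow> pol_minus I z x > pol_minus I z y) \<and>
     (\<forall>x y z. x > y \<longrightarrow> pol_div I x z > pol_div I y z) \<and>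
     (\<forall>x y z. x > y \<longrightarrow> pol_div I z x > pol_div I z y)"

type_synonym prule = "trm \<times> (real \<times> trm) list"

definition vx :: trm where "vx = V 0"
definition vy :: trm where "vy = V 1"

definition R_pdiv :: "prule list" where
  "R_pdiv =
    [ (Minus vx Zero, [(1, vx)]),
      (Minus (S vx) (S vy), [(1, Minus vx vy)]),
      (Div Zero (S vy), [(1, Zero)]),
      (Div (S vx) (S vy), [(1/2, Div (S vx) (S vy)), (1/2, S (Div (Minus vx vy) (S vy)))]) ]"

definition rule_ok :: "mlpi \<Rightarrow> prule \<Rightarrow> bool" where
  "rule_ok I r \<longleftrightarrow>
     (\<exists>j < length (snd r). \<forall>\<sigma>. Pol I \<sigma> (fst r) > Pol I \<sigma> (snd (snd r ! j))) \<and>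
     (\<forall>\<sigma>. real (Pol I \<sigma> (fst r)) \<ge>
            (\<Sum>j < length (snd r). fst (snd r ! j) * real (Pol I \<sigma> (snd (snd r ! j)))))"

end

theory Submission
  imports Defs
begin

text \<open>Only the probabilistic rule for div matters, and only condition (1). Its first
right-hand side is the left-hand side itself, so the strict decrease must go to
s(div(minus(x,y), s(y))). Instantiate x by 0 and y by a = Pol(s(0)): then
Pol(s(x)) = a, while monotonicity forces Pol(minus(0,a)) \<ge> a and Pol(s(t)) \<ge> Pol(t);
as all coefficients are natural numbers, Pol(div) is monotone in its first argument,
so the right-hand side is at least as large as the left-hand side.\<close>

lemma monotonic_pol_s_ge:
  assumes "monotonic I"
  shows "x \<le> pol_s I x"
proof -
  have "pol_s I 0 < pol_s I 1"
    using assms unfolding monotonic_def by simp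
  then have "1 \<le> sC1 I"
    by (simp add: pol_s_def)
  then show ?thesis
    by (simp add: pol_s_def trans_le_add2)
qed

lemma monotonic_pol_minus_ge_right:
  assumes "monotonic I"
  shows "y \<le> pol_minus I x y"
proof -
  have "pol_minus I 0 0 < pol_minus I 0 1"
    using assms unfolding monotonic_def by simp
  then have "1 \<le> mC01 I"
    by (simp add: pol_minus_def)
  then have "y \<le> mC01 I * y"
    by simp
  also have "\<dots> \<le> pol_minus I x y"
    by (simp add: pol_minus_def)
  finally show ?thesis .
qed

lemma pol_div_mono_left:
  assumes "x \<le> x'"
  shows "pol_div I x y \<le> pol_div I x' y"
  unfolding pol_div_def using assms
  by (intro add_mono mult_le_mono order_refl) auto

lemma div_rule_rhs_not_decreasing:
  assumes "monotonic I"
  obtains \<sigma> where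
    "Pol I \<sigma> (Div (S vx) (S vy)) \<le> Pol I \<sigma> (S (Div (Minus vx vy) (S vy)))"
proof -
  define a where "a = sC0 I"
  define \<sigma> where "\<sigma> = (\<lambda>n::nat. if n = 0 then 0 else a)"
  define v where "v = Pol I \<sigma> (S vy)"
  have "Pol I \<sigma> (Div (S vx) (S vy)) = pol_div I a v"
    by (simp add: v_def vx_def \<sigma>_def pol_s_def a_def)
  also have "\<dots> \<le> pol_div I (pol_minus I 0 a) v"
    using monotonic_pol_minus_ge_right[OF assms] by (rule pol_div_mono_left)
  also have "\<dots> \<le> pol_s I (pol_div I (pol_minus I 0 a) v)"
    using assms by (rule monotonic_pol_s_ge)
  also have "\<dots> = Pol I \<sigma> (S (Div (Minus vx vy) (S vy)))"
    by (simp add: v_def vx_def vy_def \<sigma>_def)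
  finally show thesis
    by (rule that)
qed

lemma rule_ok_div_strict_second_rhs:
  assumes "rule_ok I (Div (S vx) (S vy),
             [(1/2, Div (S vx) (S vy)), (1/2, S (Div (Minus vx vy) (S vy)))])"
  shows "Pol I \<sigma> (S (Div (Minus vx vy) (S vy))) < Pol I \<sigma> (Div (S vx) (S vy))"
proof -
  let ?rhs = "[(1/2::real, Div (S vx) (S vy)), (1/2, S (Div (Minus vx vy) (S vy)))]"
  from assms obtain j where "j < length ?rhs" and
    strict: "\<forall>\<sigma>. Pol I \<sigma> (Div (S vx) (S vy)) > Pol I \<sigma> (snd (?rhs ! j))"
    unfolding rule_ok_def fst_conv snd_conv by blast
  moreover have "j \<noteq> 0"
  proof
    assume "j = 0"
    with strict show False
      by auto
  qed
  ultimately have "j = Suc 0"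
    by simp
  with strict show ?thesis
    by (simp only: nth_Cons_Suc nth_Cons_0 snd_conv)
qed

theorem mainTheorem9:
  shows "\<not> (\<exists>I. monotonic I \<and> (\<forall>r \<in> set R_pdiv. rule_ok I r))"
proof
  assume "\<exists>I. monotonic I \<and> (\<forall>r \<in> set R_pdiv. rule_ok I r)"
  then obtain I where mono: "monotonic I" and ok: "\<forall>r \<in> set R_pdiv. rule_ok I r"
    by blast
  obtain \<sigma> where not_decreasing:
    "Pol I \<sigma> (Div (S vx) (S vy)) \<le> Pol I \<sigma> (S (Div (Minus vx vy) (S vy)))"
    using mono by (rule div_rule_rhs_not_decreasing)
  have "rule_ok I (Div (S vx) (S vy),
          [(1/2, Div (S vx) (S vy)), (1/2, S (Div (Minus vx vy) (S vy)))])"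
    using ok unfolding R_pdiv_def by simp
  then have "Pol I \<sigma> (S (Div (Minus vx vy) (S vy))) < Pol I \<sigma> (Div (S vx) (S vy))"
    by (rule rule_ok_div_strict_second_rhs)
  with leD[OF not_decreasing] show False
    by contradiction
qed

end
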